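(* Consider the semi-discrete scheme $$\frac{du_i}{dt}=\frac{1}{\Delta x}\big(F_{i-1/2}-F_{i+1/2}\big)+\bar u_{i-1/2},\qquad \bar u_{i+1/2}=\frac{u_i+u_{i+1}}2,$$ $$F_{i+1/2}=\begin{cases}u_i^2/2 & \text{if }\bar u_{i+1/2}>0,\\ 0&\text{if }\bar u_{i+1/2}=0,\\ u_{i+1}^2/2&\text{if }\bar u_{i+1/2}<0,\end{cases}$$ for the equation $u_t+(u^2/2)_x=u$, with $\Delta x>0$. Let $\{u_i\}$ be a sequence at which the right-hand side vanishes for every index $i$ involved (an equilibrium). Then: - (i) there is no index $i$ with $\bar u_{i-1/2}<0$ and $\bar u_{i+1/2}>0$; - (ii) there is no index $i$ with $\bar u_{i-3/2}<0$, $\bar u_{i-1/2}=0$ and $\bar u_{i+1/2}>0$.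
   Context: The unknowns $u_i$ are real numbers indexed by the cells of a uniform mesh with spacing $\Delta x$. An equilibrium of the scheme is a sequence $\{u_i\}$ with $F_{i-1/2}-F_{i+1/2}+\Delta x\,\bar u_{i-1/2}=0$ for all $i$. *)

theory Defs
  imports Complex_Main
begin

text \<open>Cells are indexed by integers; u :: int => real. ubar u i stands for
  the interface average at i+1/2, and flux u i for F at i+1/2.\<close>

definition ubar :: "(int \<Rightarrow> real) \<Rightarrow> int \<Rightarrow> real" where
  "ubar u i = (u i + u (i + 1)) / 2"

definition flux :: "(int \<Rightarrow> real) \<Rightarrow> int \<Rightarrow> real" where
  "flux u i = (if ubar u i > 0 then (u i)^2 / 2
               else if ubar u i = 0 then 0
               else (u (i + 1))^2 / 2)"

definition equilibrium :: "real \<Rightarrow> (int \<Rightarrow> real) \<Rightarrow> bool" where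
  "equilibrium dx u \<longleftrightarrow>
     (\<forall>i. flux u (i - 1) - flux u i + dx * ubar u (i - 1) = 0)"

end

theory Submission
  imports Defs
begin

text \<open>At an equilibrium the balance at cell i reads
  dx * ubar(i-1/2) = F(i+1/2) - F(i-1/2), so any configuration whose two interface fluxes
  coincide forces ubar(i-1/2) = 0. An expansion ubar(i-1/2) < 0 < ubar(i+1/2) has both
  fluxes equal to u_i^2/2. In the configuration with a zero interface in between, the
  balance at cell i gives u_i^2/2 = 0, hence u_i = u_(i-1) = 0; then both fluxes around
  cell i-1 vanish, contradicting ubar(i-3/2) < 0.\<close>

lemma flux_of_ubar_pos: "ubar u i > 0 \<Longrightarrow> flux u i = (u i)^2 / 2"
  by (simp add: flux_def)

lemma flux_of_ubar_zero: "ubar u i = 0 \<Longrightarrow> flux u i = 0"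
  by (simp add: flux_def)

lemma flux_of_ubar_neg: "ubar u i < 0 \<Longrightarrow> flux u i = (u (i + 1))^2 / 2"
  by (simp add: flux_def)

lemma equilibrium_balance:
  assumes "equilibrium dx u"
  shows "dx * ubar u (i - 1) = flux u i - flux u (i - 1)"
proof -
  have "flux u (i - 1) - flux u i + dx * ubar u (i - 1) = 0"
    using assms unfolding equilibrium_def by blast
  then show ?thesis by linarith
qed

lemma equilibrium_equal_fluxes_imp_ubar_zero:
  assumes "dx > 0" and "equilibrium dx u" and "flux u (i - 1) = flux u i"
  shows "ubar u (i - 1) = 0"
  using equilibrium_balance[OF assms(2), of i] assms(1,3) by simp

lemma equilibrium_no_expansion:
  assumes "dx > 0" and "equilibrium dx u"
  shows "\<not> (ubar u (i - 1) < 0 \<and> ubar u i > 0)"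
proof
  assume expansion: "ubar u (i - 1) < 0 \<and> ubar u i > 0"
  then have "flux u (i - 1) = flux u i"
    using flux_of_ubar_neg[of u "i - 1"] flux_of_ubar_pos[of u i] by simp
  then show False
    using equilibrium_equal_fluxes_imp_ubar_zero[OF assms] expansion by simp
qed

lemma equilibrium_no_expansion_through_zero:
  assumes "dx > 0" and "equilibrium dx u"
  shows "\<not> (ubar u (i - 2) < 0 \<and> ubar u (i - 1) = 0 \<and> ubar u i > 0)"
proof
  assume config: "ubar u (i - 2) < 0 \<and> ubar u (i - 1) = 0 \<and> ubar u i > 0"
  then have zero_flux: "flux u (i - 1) = 0"
    by (simp add: flux_of_ubar_zero)
  have "(u i)^2 / 2 = 0"
    using equilibrium_balance[OF assms(2), of i] config zero_flux
    by (simp add: flux_of_ubar_pos)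
  then have "u i = 0" by simp
  with config have "u (i - 1) = 0"
    by (simp add: ubar_def)
  with config have "flux u (i - 1 - 1) = flux u (i - 1)"
    using flux_of_ubar_neg[of u "i - 2"] zero_flux by simp
  then have "ubar u (i - 1 - 1) = 0"
    by (rule equilibrium_equal_fluxes_imp_ubar_zero[OF assms])
  with config show False by simp
qed

theorem mainTheorem4:
  fixes dx :: real and u :: "int \<Rightarrow> real"
  assumes "dx > 0" and "equilibrium dx u"
  shows "(\<not> (\<exists>i. ubar u (i - 1) < 0 \<and> ubar u i > 0)) \<and>
    (\<not> (\<exists>i. ubar u (i - 2) < 0 \<and> ubar u (i - 1) = 0 \<and> ubar u i > 0))"
  using equilibrium_no_expansion[OF assms] equilibrium_no_expansion_through_zero[OF assms]
  by blast

end
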